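(* Let $\mathcal Q$ be a question space, $\mathcal A$ an answer space, $\Delta(\mathcal A)$ the set of probability measures on $\mathcal A$, $p_0$ a distribution on $\mathcal Q$, $s:\mathcal Q\times\mathcal A\to[0,1]$ a reward function, and $\tau\in(0,1]$ a threshold. Let $\Pi\subset(\mathcal Q\to\Delta(\mathcal A))$ be a finite model class, the models being written $\pi_\theta$. Fix an iteration $t$ with current model $\hat\theta_t$, and suppose that the conditional distribution over answers induced by the filtered distribution \[ D'_{p_0,\hat\theta_t}(q,a)=\frac{p_0(q)\,\pi_{\hat\theta_t}(a\mid q)\,\mathbf 1_{\{s(q,a)\ge\tau\}}}{Z_{p_0}(\hat\theta_t)}, \] namely $a\mapsto \pi_{\hat\theta_t}(a\mid q)\mathbf 1_{\{s(q,a)\ge\tau\}}/\alpha(\hat\theta_t,q)$, belongs to $\Pi$. Sample $n$ questions $q\sim p_0$ i.i.d. For each sampled $q$, draw $m\ge 1$ i.i.d. candidates $a_1,\dots,a_m\sim\pi_{\hat\theta_t}(\cdot\mid q)$ sequentially and keep the first accepted one: include $(q,a_j)$ in the training data, where $j:=\min\{i\in[m]: s(q,a_i)\ge\tau\}$, and discard $q$ if no such $j$ exists. Let $n_t^{(m)}$ be the resulting number of accepted pairs $\{(q_i,a_i)\}_{i=1}^{n_t^{(m)}}$, and let \[ \hat\theta_{t+1}=\arg\max_{\theta:\ \pi_\theta\in\Pi}\ \frac{1}{n_t^{(m)}}\sum_{i=1}^{n_t^{(m)}}\log\pi_\theta(a_i\mid q_i). \] Assume $\operatorname{ess\,inf}_{q}\alpha(\hat\theta_t,q)>0$.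 Then for any $\delta\in(0,1)$, with probability at least $1-\delta$, \[ V_{p_0}(\hat\theta_{t+1})\ \ge\ \tau\left(1-\frac{Z^{(m)}_{p_0}(\hat\theta_t)}{\alpha^{(m)}(\hat\theta_t)}\sqrt{\frac{2\log(|\Pi|\,\delta^{-1})}{n_t^{(m)}}}\right), \] where $\alpha^{(m)}(\hat\theta_t,q):=1-(1-\alpha(\hat\theta_t,q))^m$, $Z^{(m)}_{p_0}(\hat\theta_t):=\mathbb E_{q\sim p_0}[\alpha^{(m)}(\hat\theta_t,q)]$, and $\alpha^{(m)}(\hat\theta_t):=\operatorname{ess\,inf}_q\alpha^{(m)}(\hat\theta_t,q)$. Moreover, the ratio $Z^{(m)}_{p_0}(\hat\theta_t)/\alpha^{(m)}(\hat\theta_t)$ is non-increasing in $m$ and $\lim_{m\to\infty}Z^{(m)}_{p_0}(\hat\theta_t)/\alpha^{(m)}(\hat\theta_t)=1$.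
   Context: An autoregressive model with parameters $\theta$ gives conditional answer distributions $\pi_\theta(\cdot\mid q)$. Per-question acceptance rate: $\alpha(\theta,q):=\Pr_{a\sim\pi_\theta(\cdot\mid q)}[s(q,a)\ge\tau]$, assumed positive; global acceptance rate $Z_p(\theta):=\mathbb E_{q\sim p}[\alpha(\theta,q)]$. Expected reward: $V_{p}(\theta):=\mathbb E_{q\sim p,\,a\sim\pi_\theta(\cdot\mid q)}[s(q,a)]$. The probability is over the sampling of questions and candidate answers. *)

theory Defs
  imports "HOL-Probability.Probability"
begin

definition acc_rate :: "('q \<Rightarrow> 'a pmf) \<Rightarrow> ('q \<Rightarrow> 'a \<Rightarrow> real) \<Rightarrow> real \<Rightarrow> 'q \<Rightarrow> real" where
  "acc_rate \<pi> s \<tau> q = measure_pmf.prob (\<pi> q) {a. \<tau> \<le> s q a}"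

definition acc_rate_m :: "nat \<Rightarrow> ('q \<Rightarrow> 'a pmf) \<Rightarrow> ('q \<Rightarrow> 'a \<Rightarrow> real) \<Rightarrow> real \<Rightarrow> 'q \<Rightarrow> real" where
  "acc_rate_m m \<pi> s \<tau> q = 1 - (1 - acc_rate \<pi> s \<tau> q) ^ m"

definition ess_inf :: "'b measure \<Rightarrow> ('b \<Rightarrow> real) \<Rightarrow> ereal" where
  "ess_inf M f = - esssup M (\<lambda>x. - ereal (f x))"

definition glob_acc_m :: "nat \<Rightarrow> 'q pmf \<Rightarrow> ('q \<Rightarrow> 'a pmf) \<Rightarrow> ('q \<Rightarrow> 'a \<Rightarrow> real) \<Rightarrow> real \<Rightarrow> real" where
  "glob_acc_m m p0 \<pi> s \<tau> = measure_pmf.expectation p0 (acc_rate_m m \<pi> s \<tau>)"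

definition ess_acc_m :: "nat \<Rightarrow> 'q pmf \<Rightarrow> ('q \<Rightarrow> 'a pmf) \<Rightarrow> ('q \<Rightarrow> 'a \<Rightarrow> real) \<Rightarrow> real \<Rightarrow> ereal" where
  "ess_acc_m m p0 \<pi> s \<tau> = ess_inf (measure_pmf p0) (acc_rate_m m \<pi> s \<tau>)"

definition exp_reward :: "'q pmf \<Rightarrow> ('q \<Rightarrow> 'a pmf) \<Rightarrow> ('q \<Rightarrow> 'a \<Rightarrow> real) \<Rightarrow> real" where
  "exp_reward p0 \<pi> s =
     measure_pmf.expectation (bind_pmf p0 (\<lambda>q. map_pmf (\<lambda>a. (q, a)) (\<pi> q))) (\<lambda>(q, a). s q a)"

definition sample_pmf :: "nat \<Rightarrow> nat \<Rightarrow> 'q pmf \<Rightarrow> ('q \<Rightarrow> 'a pmf) \<Rightarrow> ('q \<times> 'a list) list pmf" where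
  "sample_pmf n m p0 \<pi> =
     replicate_pmf n (bind_pmf p0 (\<lambda>q. map_pmf (\<lambda>as. (q, as)) (replicate_pmf m (\<pi> q))))"

definition accepted_data :: "('q \<Rightarrow> 'a \<Rightarrow> real) \<Rightarrow> real \<Rightarrow> ('q \<times> 'a list) list \<Rightarrow> ('q \<times> 'a) list" where
  "accepted_data s \<tau> \<omega> =
     List.map_filter (\<lambda>(q, as). map_option (\<lambda>a. (q, a)) (find (\<lambda>a. \<tau> \<le> s q a) as)) \<omega>"

definition ln_ext :: "real \<Rightarrow> ereal" where
  "ln_ext x = (if 0 < x then ereal (ln x) else -\<infinity>)"

definition avg_loglik :: "('q \<Rightarrow> 'a pmf) \<Rightarrow> ('q \<times> 'a) list \<Rightarrow> ereal" where
  "avg_loglik \<pi> D = (\<Sum>(q, a)\<leftarrow>D. ln_ext (pmf (\<pi> q) a)) / ereal (real (length D))"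

end

(* Let sigma(a|q) = pi_t(a|q) 1[s(q,a) >= tau] / alpha(q) be the filtered model: it lies in the
   class and is the exact law of an accepted answer given its question. For a competitor pi put
   W = E_q[alpha^(m)(q) (1 - acc_pi(q))] and h = W / (2 Z^(m)). A sampling round contributes the
   factor 1 if all m candidates are rejected and e^h sqrt(pi(a|q) / sigma(a|q)) for an accepted
   pair (q,a). By the Bhattacharyya bound E_sigma sqrt(pi/sigma) <= (1 + acc_pi(q)) / 2 the expected
   factor is at most 1 - Z + Z e^h (1 - h) <= 1. If the maximum-likelihood estimate prefers pi to
   sigma on N accepted pairs, the product of the factors is at least e^(hN), so by Markov's
   inequality this happens together with hN > c with probability at most e^(-c). A union bound over
   the class with c = ln(|Pi| / delta) shows that with probability at least 1 - delta the estimate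
   satisfies N W / (2 Z) <= c. As alpha^(m) (1 - E acc) <= W and V >= tau E acc, this gives
   V >= tau (1 - (Z / alpha^(m)) 2c/N), which implies the stated square-root bound.

   The essential infimum of alpha^(m) is 1 - (1 - a)^m for a the essential infimum of alpha, so the
   claims about the ratio follow from the monotonicity in x of (1 - x^(m+1)) / (1 - x^m). *)

theory Submission
  imports Defs
begin

lemma integrable_measure_pmf_bounded:
  fixes f :: "'b \<Rightarrow> real"
  assumes "\<And>x. x \<in> set_pmf p \<Longrightarrow> \<bar>f x\<bar> \<le> B"
  shows "integrable (measure_pmf p) f"
  using assms by (intro measure_pmf.integrable_const_bound[where B = B]) (auto simp: AE_measure_pmf_iff)

lemma one_minus_power_bounds:
  fixes x :: real
  assumes "0 \<le> x" "x \<le> 1"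
  shows "0 \<le> 1 - (1 - x) ^ k" "1 - (1 - x) ^ k \<le> 1"
  using assms by (simp_all add: power_le_one)

section \<open>Essential infima over a pmf\<close>

lemma ess_inf_measure_pmf:
  fixes p :: "'b pmf" and f :: "'b \<Rightarrow> real"
  assumes "bdd_below (f ` set_pmf p)"
  shows "ess_inf (measure_pmf p) f = ereal (Inf (f ` set_pmf p))"
proof -
  have ne: "f ` set_pmf p \<noteq> {}" using set_pmf_not_empty by blast
  have lower: "ess_inf (measure_pmf p) f \<le> ereal (f x)" if "x \<in> set_pmf p" for x
  proof -
    have "AE y in measure_pmf p. - ereal (f y) \<le> esssup (measure_pmf p) (\<lambda>y. - ereal (f y))"
      by (rule esssup_AE)
    then show ?thesis using that by (simp add: AE_measure_pmf_iff ess_inf_def ereal_uminus_le_reorder)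
  qed
  have "esssup (measure_pmf p) (\<lambda>y. - ereal (f y)) \<le> - ereal (Inf (f ` set_pmf p))"
    using assms by (intro esssup_I) (auto simp: AE_measure_pmf_iff intro: cInf_lower)
  then have "ereal (Inf (f ` set_pmf p)) \<le> ess_inf (measure_pmf p) f"
    unfolding ess_inf_def by (metis ereal_minus_le_minus ereal_uminus_uminus)
  moreover have "ess_inf (measure_pmf p) f \<le> ereal (Inf (f ` set_pmf p))"
    using lower by (simp add: ereal_Inf'[OF assms ne] image_image le_INF_iff)
  ultimately show ?thesis by (rule antisym[rotated])
qed

lemma Inf_image_one_minus_power:
  fixes S :: "real set"
  assumes "S \<noteq> {}" "\<And>x. x \<in> S \<Longrightarrow> 0 \<le> x \<and> x \<le> 1"
  shows "Inf ((\<lambda>x. 1 - (1 - x) ^ k) ` S) = 1 - (1 - Inf S) ^ k"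
proof -
  \<comment> \<open>\<open>g\<close> agrees with the map on [0,1] and is monotone on the whole real line, as
    \<open>continuous_at_Inf_mono\<close> requires.\<close>
  define g where "g x = 1 - max 0 (1 - x) ^ k" for x :: real
  have "mono g"
    by (auto simp: g_def mono_def intro!: power_mono)
  moreover have "continuous (at_right (Inf S)) g"
    unfolding g_def by (intro continuous_intros)
  moreover have bdd: "bdd_below S" using assms(2) by (auto simp: bdd_below_def)
  ultimately have "g (Inf S) = Inf (g ` S)"
    by (rule continuous_at_Inf_mono[OF _ _ assms(1)])
  moreover have "Inf S \<le> 1"
    using assms by (meson all_not_in_conv bdd cInf_lower order_trans)
  moreover have "g ` S = (\<lambda>x. 1 - (1 - x) ^ k) ` S"
    using assms(2) by (auto simp: g_def intro!: image_cong)
  ultimately show ?thesis by (simp add: g_def)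
qed

definition min_acc_rate :: "'q pmf \<Rightarrow> ('q \<Rightarrow> 'a pmf) \<Rightarrow> ('q \<Rightarrow> 'a \<Rightarrow> real) \<Rightarrow> real \<Rightarrow> real" where
  "min_acc_rate p0 \<pi> s \<tau> = Inf (acc_rate \<pi> s \<tau> ` set_pmf p0)"

lemma acc_rate_nonneg [simp]: "0 \<le> acc_rate \<pi> s \<tau> q"
  and acc_rate_le_1 [simp]: "acc_rate \<pi> s \<tau> q \<le> 1"
  by (simp_all add: acc_rate_def)

lemma bdd_below_acc_rate: "bdd_below (acc_rate \<pi> s \<tau> ` A)"
  by (rule bdd_belowI[of _ 0]) auto

lemma min_acc_rate_le_acc_rate:
  "q \<in> set_pmf p0 \<Longrightarrow> min_acc_rate p0 \<pi> s \<tau> \<le> acc_rate \<pi> s \<tau> q"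
  unfolding min_acc_rate_def by (intro cInf_lower bdd_below_acc_rate) auto

lemma min_acc_rate_le_1: "min_acc_rate p0 \<pi> s \<tau> \<le> 1"
proof -
  obtain q where "q \<in> set_pmf p0"
    using set_pmf_not_empty[of p0] by blast
  then have "min_acc_rate p0 \<pi> s \<tau> \<le> acc_rate \<pi> s \<tau> q"
    by (rule min_acc_rate_le_acc_rate)
  then show ?thesis
    using acc_rate_le_1 by (rule order_trans)
qed

lemma ess_inf_acc_rate:
  "ess_inf (measure_pmf p0) (acc_rate \<pi> s \<tau>) = ereal (min_acc_rate p0 \<pi> s \<tau>)"
  unfolding min_acc_rate_def by (intro ess_inf_measure_pmf bdd_below_acc_rate)

lemma ess_acc_m_eq:
  "ess_acc_m k p0 \<pi> s \<tau> = ereal (1 - (1 - min_acc_rate p0 \<pi> s \<tau>) ^ k)"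
proof -
  have "ess_acc_m k p0 \<pi> s \<tau> = ereal (Inf ((\<lambda>x. 1 - (1 - x) ^ k) ` acc_rate \<pi> s \<tau> ` set_pmf p0))"
    unfolding ess_acc_m_def acc_rate_m_def image_image
    by (intro ess_inf_measure_pmf bdd_belowI[of _ 0]) (auto intro!: power_le_one)
  also have "\<dots> = ereal (1 - (1 - min_acc_rate p0 \<pi> s \<tau>) ^ k)"
    unfolding min_acc_rate_def using set_pmf_not_empty[of p0]
    by (subst Inf_image_one_minus_power) auto
  finally show ?thesis .
qed

lemma acc_rate_m_nonneg [simp]: "0 \<le> acc_rate_m m \<pi> s \<tau> q"
  and acc_rate_m_le_1 [simp]: "acc_rate_m m \<pi> s \<tau> q \<le> 1"
  using one_minus_power_bounds[of "acc_rate \<pi> s \<tau> q" m] by (simp_all add: acc_rate_m_def)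

lemma integrable_acc_rate_m: "integrable (measure_pmf p) (acc_rate_m m \<pi> s \<tau>)"
  by (intro integrable_measure_pmf_bounded[where B = 1]) simp

lemma ess_acc_m_le_acc_rate_m:
  "q \<in> set_pmf p0 \<Longrightarrow> real_of_ereal (ess_acc_m k p0 \<pi> s \<tau>) \<le> acc_rate_m k \<pi> s \<tau> q"
  using min_acc_rate_le_acc_rate[of q p0 \<pi> s \<tau>]
  by (simp add: ess_acc_m_eq acc_rate_m_def power_mono)

lemma ess_acc_m_pos:
  "0 < min_acc_rate p0 \<pi> s \<tau> \<Longrightarrow> 1 \<le> k \<Longrightarrow> 0 < real_of_ereal (ess_acc_m k p0 \<pi> s \<tau>)"
  using min_acc_rate_le_1[of p0 \<pi> s \<tau>] by (simp add: ess_acc_m_eq power_less_one_iff)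

lemma ess_acc_m_le_glob_acc_m: "real_of_ereal (ess_acc_m k p0 \<pi> s \<tau>) \<le> glob_acc_m k p0 \<pi> s \<tau>"
  unfolding glob_acc_m_def
  by (intro measure_pmf.integral_ge_const integrable_acc_rate_m)
     (simp add: AE_measure_pmf_iff ess_acc_m_le_acc_rate_m)

section \<open>Monotonicity of the normalised acceptance ratio\<close>

lemma one_minus_power_ratio_mono:
  fixes u v :: real
  assumes "0 \<le> u" "u \<le> v" "v < 1"
  shows "(1 - u ^ Suc k) * (1 - v ^ k) \<le> (1 - u ^ k) * (1 - v ^ Suc k)"
proof -
  have key: "u ^ k * (\<Sum>i<k. v ^ i) \<le> v ^ k * (\<Sum>i<k. u ^ i)"
    unfolding sum_distrib_left
  proof (rule sum_mono)
    fix i assume "i \<in> {..<k}"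
    then have split: "u ^ k = u ^ i * u ^ (k - i)" "v ^ k = v ^ i * v ^ (k - i)"
      by (simp_all flip: power_add)
    have "u ^ (k - i) \<le> v ^ (k - i)"
      using assms by (simp add: power_mono)
    then show "u ^ k * v ^ i \<le> v ^ k * u ^ i"
      unfolding split using assms by (simp add: mult_left_mono mult.left_commute mult.commute)
  qed
  have "(\<Sum>i<Suc k. u ^ i) * (\<Sum>i<k. v ^ i) \<le> (\<Sum>i<k. u ^ i) * (\<Sum>i<Suc k. v ^ i)"
    using key by (simp add: algebra_simps)
  then have "(1 - u) * (1 - v) * ((\<Sum>i<Suc k. u ^ i) * (\<Sum>i<k. v ^ i))
      \<le> (1 - u) * (1 - v) * ((\<Sum>i<k. u ^ i) * (\<Sum>i<Suc k. v ^ i))"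
    using assms by (intro mult_left_mono) auto
  then show ?thesis
    by (simp only: one_diff_power_eq[of u] one_diff_power_eq[of v]) (simp add: algebra_simps)
qed

context
  fixes p :: "'b pmf" and f :: "'b \<Rightarrow> real" and a :: real
  assumes a_pos: "0 < a" and f_bounds: "\<And>q. q \<in> set_pmf p \<Longrightarrow> a \<le> f q \<and> f q \<le> 1"
begin

private lemma a_le_1: "a \<le> 1"
proof -
  obtain q where "q \<in> set_pmf p"
    using set_pmf_not_empty[of p] by blast
  then show ?thesis
    using f_bounds by fastforce
qed

private lemma denominator_pos: "1 \<le> k \<Longrightarrow> 0 < 1 - (1 - a) ^ k"
  using a_pos a_le_1 by (simp add: power_less_one_iff)

private lemma f_nonneg: "q \<in> set_pmf p \<Longrightarrow> 0 \<le> f q"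
  using a_pos f_bounds[of q] by linarith

private lemma integrable_one_minus_power: "integrable (measure_pmf p) (\<lambda>q. 1 - (1 - f q) ^ k)"
proof (rule integrable_measure_pmf_bounded[where B = 1])
  fix q assume "q \<in> set_pmf p"
  then have "0 \<le> f q" "f q \<le> 1"
    using f_nonneg f_bounds by auto
  then show "\<bar>1 - (1 - f q) ^ k\<bar> \<le> 1"
    using one_minus_power_bounds[of "f q" k] by simp
qed

private lemma ratio_Suc_le:
  assumes "1 \<le> k"
  shows "measure_pmf.expectation p (\<lambda>q. 1 - (1 - f q) ^ Suc k) / (1 - (1 - a) ^ Suc k)
    \<le> measure_pmf.expectation p (\<lambda>q. 1 - (1 - f q) ^ k) / (1 - (1 - a) ^ k)"
proof -
  have "measure_pmf.expectation p (\<lambda>q. (1 - (1 - f q) ^ Suc k) * (1 - (1 - a) ^ k))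
      \<le> measure_pmf.expectation p (\<lambda>q. (1 - (1 - f q) ^ k) * (1 - (1 - a) ^ Suc k))"
    using f_bounds a_pos
    by (intro integral_mono_AE integrable_mult_left integrable_one_minus_power)
       (auto simp: AE_measure_pmf_iff simp del: power_Suc intro!: one_minus_power_ratio_mono)
  then show ?thesis
    using denominator_pos[OF assms] denominator_pos[of "Suc k"] by (simp add: divide_simps del: power_Suc)
qed

lemma expectation_one_minus_power_ratio_antimono:
  assumes "1 \<le> k" "k \<le> k'"
  shows "measure_pmf.expectation p (\<lambda>q. 1 - (1 - f q) ^ k') / (1 - (1 - a) ^ k')
    \<le> measure_pmf.expectation p (\<lambda>q. 1 - (1 - f q) ^ k) / (1 - (1 - a) ^ k)"
  using assms(2,1)
proof (induction rule: dec_induct)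
  case (step j)
  then show ?case using ratio_Suc_le[of j] by simp
qed simp

lemma expectation_one_minus_power_ratio_tendsto_1:
  "(\<lambda>k. measure_pmf.expectation p (\<lambda>q. 1 - (1 - f q) ^ k) / (1 - (1 - a) ^ k)) \<longlonglongrightarrow> 1"
proof (rule tendsto_sandwich[where f = "\<lambda>_. 1" and h = "\<lambda>k. 1 / (1 - (1 - a) ^ k)"])
  have "1 - (1 - a) ^ k \<le> measure_pmf.expectation p (\<lambda>q. 1 - (1 - f q) ^ k)"
    "measure_pmf.expectation p (\<lambda>q. 1 - (1 - f q) ^ k) \<le> 1" for k
    using f_bounds a_pos one_minus_power_bounds
    by (auto intro!: measure_pmf.integral_ge_const measure_pmf.integral_le_const
        integrable_one_minus_power power_mono simp: AE_measure_pmf_iff)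
  then show "\<forall>\<^sub>F k in sequentially. 1 \<le> measure_pmf.expectation p (\<lambda>q. 1 - (1 - f q) ^ k) / (1 - (1 - a) ^ k)"
    "\<forall>\<^sub>F k in sequentially. measure_pmf.expectation p (\<lambda>q. 1 - (1 - f q) ^ k) / (1 - (1 - a) ^ k)
      \<le> 1 / (1 - (1 - a) ^ k)"
    using denominator_pos by (auto simp: eventually_sequentially less_imp_le intro!: exI[of _ 1] divide_right_mono)
  have lim: "(\<lambda>k. 1 - (1 - a) ^ k) \<longlonglongrightarrow> 1 - 0"
    using a_pos a_le_1 by (intro tendsto_diff LIMSEQ_power_zero) auto
  show "(\<lambda>k. 1 / (1 - (1 - a) ^ k)) \<longlonglongrightarrow> 1"
    using tendsto_divide[OF tendsto_const lim, of 1] by simp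
qed simp

end

section \<open>Integrals over repeated sampling\<close>

lemma nn_integral_indicator_cond_pmf:
  assumes "set_pmf p \<inter> A \<noteq> {}"
  shows "(\<integral>\<^sup>+x. indicator A x * g x \<partial>measure_pmf p)
    = ennreal (measure_pmf.prob p A) * (\<integral>\<^sup>+x. g x \<partial>measure_pmf (cond_pmf p A))"
proof -
  have pA: "emeasure (measure_pmf p) A \<noteq> 0" "emeasure (measure_pmf p) A \<noteq> top"
    using assms measure_pmf_posI[of _ p A] by (auto simp: measure_pmf.emeasure_eq_measure)
  have "(\<integral>\<^sup>+x. g x \<partial>measure_pmf (cond_pmf p A))
      = (\<integral>\<^sup>+x. g x * indicator A x \<partial>measure_pmf p) / emeasure (measure_pmf p) A"
    using assms by (simp add: cond_pmf.rep_eq nn_integral_uniform_measure)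
  also have "(\<integral>\<^sup>+x. g x * indicator A x \<partial>measure_pmf p) = (\<integral>\<^sup>+x. indicator A x * g x \<partial>measure_pmf p)"
    by (simp add: mult.commute)
  moreover have "emeasure (measure_pmf p) A * (X / emeasure (measure_pmf p) A) = X" for X
    using mult_divide_eq_ennreal[OF pA, of X] by (simp add: ennreal_times_divide mult.commute)
  ultimately show ?thesis
    by (simp add: measure_pmf.emeasure_eq_measure[symmetric])
qed

lemma nn_integral_find_replicate_pmf:
  assumes "set_pmf p \<inter> {x. P x} \<noteq> {}"
  defines "\<alpha> \<equiv> measure_pmf.prob p {x. P x}"
  shows "(\<integral>\<^sup>+xs. H (find P xs) \<partial>measure_pmf (replicate_pmf m p))
    = ennreal ((1 - \<alpha>) ^ m) * H None
      + ennreal (1 - (1 - \<alpha>) ^ m) * (\<integral>\<^sup>+x. H (Some x) \<partial>measure_pmf (cond_pmf p {x. P x}))"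
proof (induction m)
  case (Suc m)
  define C where "C = (\<integral>\<^sup>+x. H (Some x) \<partial>measure_pmf (cond_pmf p {x. P x}))"
  define R where "R = ennreal ((1 - \<alpha>) ^ m) * H None + ennreal (1 - (1 - \<alpha>) ^ m) * C"
  have \<alpha>: "0 \<le> \<alpha>" "\<alpha> \<le> 1"
    unfolding \<alpha>_def by auto
  have "(\<integral>\<^sup>+xs. H (find P xs) \<partial>measure_pmf (replicate_pmf (Suc m) p))
      = (\<integral>\<^sup>+x. indicator {x. P x} x * H (Some x) + R * indicator (- {x. P x}) x \<partial>measure_pmf p)"
    by (auto simp: Suc R_def C_def indicator_def intro!: nn_integral_cong)
  also have "\<dots> = (\<integral>\<^sup>+x. indicator {x. P x} x * H (Some x) \<partial>measure_pmf p)
      + (\<integral>\<^sup>+x. R * indicator (- {x. P x}) x \<partial>measure_pmf p)"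
    by (rule nn_integral_add) auto
  also have "\<dots> = ennreal \<alpha> * C + R * ennreal (1 - \<alpha>)"
  proof -
    have "emeasure (measure_pmf p) (- {x. P x}) = ennreal (1 - \<alpha>)"
      using measure_pmf.prob_compl[of "{x. P x}" p]
      by (simp add: \<alpha>_def measure_pmf.emeasure_eq_measure Compl_eq_Diff_UNIV)
    then show ?thesis
      using nn_integral_indicator_cond_pmf[OF assms(1)]
      by (simp add: C_def \<alpha>_def nn_integral_cmult_indicator)
  qed
  also have "\<dots> = ennreal ((1 - \<alpha>) * (1 - \<alpha>) ^ m) * H None
      + (ennreal \<alpha> + ennreal ((1 - \<alpha>) * (1 - (1 - \<alpha>) ^ m))) * C"
    using \<alpha> power_le_one[of "1 - \<alpha>" m]
    by (simp add: R_def distrib_left distrib_right ennreal_mult' ac_simps)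
  also have "ennreal \<alpha> + ennreal ((1 - \<alpha>) * (1 - (1 - \<alpha>) ^ m)) = ennreal (1 - (1 - \<alpha>) ^ Suc m)"
    using \<alpha> power_le_one[of "1 - \<alpha>" m] mult_nonneg_nonneg[of "1 - \<alpha>" "1 - (1 - \<alpha>) ^ m"]
    by (subst ennreal_plus[symmetric]) (auto simp: algebra_simps)
  finally show ?case
    by (simp add: C_def)
qed simp

lemma nn_integral_prod_list_replicate_pmf:
  "(\<integral>\<^sup>+xs. prod_list (map g xs) \<partial>measure_pmf (replicate_pmf n p)) = (\<integral>\<^sup>+x. g x \<partial>measure_pmf p) ^ n"
  by (induction n) (simp_all add: nn_integral_cmult nn_integral_multc)

lemma nn_integral_sqrt_pmf_ratio_le:
  assumes "set_pmf \<sigma> \<subseteq> A"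
  shows "(\<integral>\<^sup>+a. ennreal (sqrt (pmf \<pi> a / pmf \<sigma> a)) \<partial>measure_pmf \<sigma>)
    \<le> ennreal ((measure_pmf.prob \<pi> A + 1) / 2)"
proof -
  have am_gm: "pmf \<sigma> a * sqrt (pmf \<pi> a / pmf \<sigma> a) \<le> (pmf \<pi> a * indicator A a + pmf \<sigma> a) / 2" for a
  proof (cases "a \<in> set_pmf \<sigma>")
    case True
    then have "0 < pmf \<sigma> a" "a \<in> A"
      using assms by (auto simp: pmf_positive)
    moreover have "sqrt (pmf \<sigma> a) * sqrt (pmf \<sigma> a) = pmf \<sigma> a"
      by simp
    ultimately have "pmf \<sigma> a * sqrt (pmf \<pi> a / pmf \<sigma> a) = sqrt (pmf \<pi> a * pmf \<sigma> a)"
      by (simp add: real_sqrt_mult real_sqrt_divide field_simps)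
    also have "\<dots> \<le> (pmf \<pi> a + pmf \<sigma> a) / 2"
      by (rule arith_geo_mean_sqrt) auto
    finally show ?thesis
      using \<open>a \<in> A\<close> by simp
  qed (simp add: set_pmf_iff)
  have "(\<integral>\<^sup>+a. ennreal (sqrt (pmf \<pi> a / pmf \<sigma> a)) \<partial>measure_pmf \<sigma>)
      = (\<integral>\<^sup>+a. ennreal (pmf \<sigma> a * sqrt (pmf \<pi> a / pmf \<sigma> a)) \<partial>count_space UNIV)"
    by (simp add: nn_integral_measure_pmf ennreal_mult'')
  also have "\<dots> \<le> (\<integral>\<^sup>+a. ennreal ((pmf \<pi> a * indicator A a + pmf \<sigma> a) / 2) \<partial>count_space UNIV)"
    using am_gm by (intro nn_integral_mono ennreal_leI)
  also have "\<dots> = (\<integral>\<^sup>+a. ennreal (pmf \<pi> a) * indicator A a + ennreal (pmf \<sigma> a) \<partial>count_space UNIV) / 2"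
    by (simp add: nn_integral_divide ennreal_divide_numeral[symmetric] ennreal_plus ennreal_mult'' ennreal_indicator)
  also have "\<dots> = (emeasure (measure_pmf \<pi>) A + 1) / 2"
    by (simp add: nn_integral_add nn_integral_measure_pmf[symmetric] nn_integral_pmf)
  also have "\<dots> = ennreal ((measure_pmf.prob \<pi> A + 1) / 2)"
    by (simp add: measure_pmf.emeasure_eq_measure ennreal_divide_numeral[symmetric] ennreal_plus)
  finally show ?thesis .
qed

section \<open>Likelihoods\<close>

lemma ln_ext_mult: "0 \<le> x \<Longrightarrow> 0 \<le> y \<Longrightarrow> ln_ext (x * y) = ln_ext x + ln_ext y"
  by (auto simp: ln_ext_def ln_mult zero_less_mult_iff)

definition likelihood :: "('q \<Rightarrow> 'a pmf) \<Rightarrow> ('q \<times> 'a) list \<Rightarrow> real" where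
  "likelihood \<pi> D = (\<Prod>(q, a)\<leftarrow>D. pmf (\<pi> q) a)"

lemma likelihood_nonneg: "0 \<le> likelihood \<pi> D"
  unfolding likelihood_def by (rule prod_list_nonneg) auto

lemma likelihood_pos: "(\<And>q a. (q, a) \<in> set D \<Longrightarrow> 0 < pmf (\<pi> q) a) \<Longrightarrow> 0 < likelihood \<pi> D"
  unfolding likelihood_def by (induction D) auto

lemma avg_loglik_eq: "avg_loglik \<pi> D = ln_ext (likelihood \<pi> D) / ereal (real (length D))"
proof -
  have "(\<Sum>(q, a)\<leftarrow>D. ln_ext (pmf (\<pi> q) a)) = ln_ext (likelihood \<pi> D)"
    unfolding likelihood_def
    using likelihood_nonneg[of \<pi>]
    by (induction D) (simp_all add: likelihood_def ln_ext_mult split_def ln_ext_def[of 1])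
  then show ?thesis
    by (simp add: avg_loglik_def)
qed

lemma likelihood_le_if_avg_loglik_le:
  assumes "0 < length D" "0 < likelihood \<sigma> D" "avg_loglik \<sigma> D \<le> avg_loglik \<pi> D"
  shows "likelihood \<sigma> D \<le> likelihood \<pi> D"
proof (cases "0 < likelihood \<pi> D")
  case True
  then show ?thesis
    using assms by (simp add: avg_loglik_eq ln_ext_def divide_right_mono_neg divide_le_cancel)
next
  case False
  then show ?thesis
    using assms by (simp add: avg_loglik_eq ln_ext_def)
qed

definition sqrt_lik_ratio :: "('q \<Rightarrow> 'a pmf) \<Rightarrow> ('q \<Rightarrow> 'a pmf) \<Rightarrow> 'q \<times> 'a \<Rightarrow> real" where
  "sqrt_lik_ratio \<pi> \<sigma> = (\<lambda>(q, a). sqrt (pmf (\<pi> q) a / pmf (\<sigma> q) a))"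

lemma prod_list_sqrt_lik_ratio:
  "prod_list (map (sqrt_lik_ratio \<pi> \<sigma>) D) = sqrt (likelihood \<pi> D / likelihood \<sigma> D)"
  by (induction D) (simp_all add: sqrt_lik_ratio_def likelihood_def split_def times_divide_times_eq flip: real_sqrt_mult)

section \<open>A Chernoff bound for the maximum-likelihood estimate\<close>

definition filtered_model :: "('q \<Rightarrow> 'a pmf) \<Rightarrow> ('q \<Rightarrow> 'a \<Rightarrow> real) \<Rightarrow> real \<Rightarrow> 'q \<Rightarrow> 'a pmf" where
  "filtered_model \<pi> s \<tau> q = cond_pmf (\<pi> q) {a. \<tau> \<le> s q a}"

definition first_accepted :: "('q \<Rightarrow> 'a \<Rightarrow> real) \<Rightarrow> real \<Rightarrow> 'q \<times> 'a list \<Rightarrow> ('q \<times> 'a) option" where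
  "first_accepted s \<tau> = (\<lambda>(q, as). map_option (\<lambda>a. (q, a)) (find (\<lambda>a. \<tau> \<le> s q a) as))"

definition sample_round :: "nat \<Rightarrow> 'q pmf \<Rightarrow> ('q \<Rightarrow> 'a pmf) \<Rightarrow> ('q \<times> 'a list) pmf" where
  "sample_round m p0 \<pi> = bind_pmf p0 (\<lambda>q. map_pmf (\<lambda>as. (q, as)) (replicate_pmf m (\<pi> q)))"

definition round_weight ::
    "('q \<Rightarrow> 'a \<Rightarrow> real) \<Rightarrow> real \<Rightarrow> ('q \<Rightarrow> 'a pmf) \<Rightarrow> ('q \<Rightarrow> 'a pmf) \<Rightarrow> real \<Rightarrow> 'q \<times> 'a list \<Rightarrow> ennreal" where
  "round_weight s \<tau> \<pi> \<sigma> h r =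
     (case first_accepted s \<tau> r of None \<Rightarrow> 1 | Some x \<Rightarrow> ennreal (exp h * sqrt_lik_ratio \<pi> \<sigma> x))"

text \<open>The weight W: Z^(m) times the rejection rate of \<open>\<pi>\<close> under the question distribution of
  the accepted data.\<close>

definition rej_weight ::
    "nat \<Rightarrow> 'q pmf \<Rightarrow> ('q \<Rightarrow> 'a pmf) \<Rightarrow> ('q \<Rightarrow> 'a pmf) \<Rightarrow> ('q \<Rightarrow> 'a \<Rightarrow> real) \<Rightarrow> real \<Rightarrow> real" where
  "rej_weight m p0 \<pi>t \<pi> s \<tau> =
     measure_pmf.expectation p0 (\<lambda>q. acc_rate_m m \<pi>t s \<tau> q * (1 - acc_rate \<pi> s \<tau> q))"

lemma accepted_data_eq: "accepted_data s \<tau> = List.map_filter (first_accepted s \<tau>)"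
  by (simp add: accepted_data_def first_accepted_def fun_eq_iff)

lemma sample_pmf_eq: "sample_pmf n m p0 \<pi> = replicate_pmf n (sample_round m p0 \<pi>)"
  by (simp add: sample_pmf_def sample_round_def)

lemma find_Some_in_set: "find P xs = Some x \<Longrightarrow> x \<in> set xs \<and> P x"
  by (induction xs) (auto split: if_splits)

lemma set_accepted_data:
  "x \<in> set (accepted_data s \<tau> \<omega>) \<longleftrightarrow> (\<exists>r\<in>set \<omega>. first_accepted s \<tau> r = Some x)"
  by (induction \<omega>) (auto simp: accepted_data_eq split: option.splits)

lemma accepted_data_in_support:
  assumes "\<omega> \<in> set_pmf (sample_pmf n m p0 \<pi>)" "(q, a) \<in> set (accepted_data s \<tau> \<omega>)"
  shows "q \<in> set_pmf p0 \<and> a \<in> set_pmf (\<pi> q) \<and> \<tau> \<le> s q a"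
  using assms
  by (fastforce simp: set_accepted_data first_accepted_def sample_pmf_eq sample_round_def
      set_replicate_pmf dest!: find_Some_in_set)

lemma nn_integral_round_weight_question_le:
  assumes "0 < acc_rate \<pi>t s \<tau> q"
  shows "(\<integral>\<^sup>+as. round_weight s \<tau> \<pi> (filtered_model \<pi>t s \<tau>) h (q, as) \<partial>measure_pmf (replicate_pmf m (\<pi>t q)))
    \<le> ennreal ((1 - acc_rate_m m \<pi>t s \<tau> q)
        + acc_rate_m m \<pi>t s \<tau> q * (exp h * ((acc_rate \<pi> s \<tau> q + 1) / 2)))"
proof -
  let ?\<sigma> = "filtered_model \<pi>t s \<tau>"
  have ne: "set_pmf (\<pi>t q) \<inter> {a. \<tau> \<le> s q a} \<noteq> {}"
    using assms by (auto simp: acc_rate_def measure_pmf_zero_iff[symmetric])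
  define H where "H = case_option 1 (\<lambda>a. ennreal (exp h) * ennreal (sqrt (pmf (\<pi> q) a / pmf (?\<sigma> q) a)))"
  have "round_weight s \<tau> \<pi> ?\<sigma> h (q, as) = H (find (\<lambda>a. \<tau> \<le> s q a) as)" for as
    by (simp add: H_def round_weight_def first_accepted_def sqrt_lik_ratio_def ennreal_mult''
        split: option.split)
  then have "(\<integral>\<^sup>+as. round_weight s \<tau> \<pi> ?\<sigma> h (q, as) \<partial>measure_pmf (replicate_pmf m (\<pi>t q)))
      = ennreal (1 - acc_rate_m m \<pi>t s \<tau> q) * 1 + ennreal (acc_rate_m m \<pi>t s \<tau> q)
        * (\<integral>\<^sup>+a. ennreal (exp h) * ennreal (sqrt (pmf (\<pi> q) a / pmf (?\<sigma> q) a)) \<partial>measure_pmf (?\<sigma> q))"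
    using nn_integral_find_replicate_pmf[OF ne, where m = m and H = H]
    by (simp add: H_def acc_rate_m_def acc_rate_def filtered_model_def)
  also have "\<dots> \<le> ennreal (1 - acc_rate_m m \<pi>t s \<tau> q) * 1 + ennreal (acc_rate_m m \<pi>t s \<tau> q)
        * (ennreal (exp h) * ennreal ((acc_rate \<pi> s \<tau> q + 1) / 2))"
    using nn_integral_sqrt_pmf_ratio_le[of "?\<sigma> q" "{a. \<tau> \<le> s q a}" "\<pi> q"] ne
    by (auto simp: nn_integral_cmult filtered_model_def acc_rate_def intro!: add_left_mono mult_left_mono)
  also have "\<dots> = ennreal ((1 - acc_rate_m m \<pi>t s \<tau> q)
      + acc_rate_m m \<pi>t s \<tau> q * (exp h * ((acc_rate \<pi> s \<tau> q + 1) / 2)))"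
    by (subst ennreal_plus) (simp_all add: ennreal_mult' del: times_divide_eq_right)
  finally show ?thesis .
qed

lemma nn_integral_round_weight_le:
  assumes pos: "\<And>q. q \<in> set_pmf p0 \<Longrightarrow> 0 < acc_rate \<pi>t s \<tau> q"
  shows "(\<integral>\<^sup>+r. round_weight s \<tau> \<pi> (filtered_model \<pi>t s \<tau>) h r \<partial>measure_pmf (sample_round m p0 \<pi>t))
    \<le> ennreal (1 - (1 - exp h) * glob_acc_m m p0 \<pi>t s \<tau> - exp h / 2 * rej_weight m p0 \<pi>t \<pi> s \<tau>)"
proof -
  define g where "g q = (1 - acc_rate_m m \<pi>t s \<tau> q)
    + acc_rate_m m \<pi>t s \<tau> q * (exp h * ((acc_rate \<pi> s \<tau> q + 1) / 2))" for q
  have g_bounds: "0 \<le> g q \<and> g q \<le> 1 + exp h" for q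
  proof -
    have "acc_rate_m m \<pi>t s \<tau> q * ((acc_rate \<pi> s \<tau> q + 1) / 2) \<le> 1"
      by (rule mult_le_one) auto
    then have "0 \<le> exp h * (acc_rate_m m \<pi>t s \<tau> q * ((acc_rate \<pi> s \<tau> q + 1) / 2))"
      "exp h * (acc_rate_m m \<pi>t s \<tau> q * ((acc_rate \<pi> s \<tau> q + 1) / 2)) \<le> exp h"
      by (auto intro!: mult_left_le)
    moreover have "g q = (1 - acc_rate_m m \<pi>t s \<tau> q)
        + exp h * (acc_rate_m m \<pi>t s \<tau> q * ((acc_rate \<pi> s \<tau> q + 1) / 2))"
      by (simp add: g_def ac_simps)
    ultimately show ?thesis
      using acc_rate_m_nonneg[of m \<pi>t s \<tau> q] acc_rate_m_le_1[of m \<pi>t s \<tau> q] by linarith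
  qed
  have int_W: "integrable (measure_pmf p0) (\<lambda>q. acc_rate_m m \<pi>t s \<tau> q * (1 - acc_rate \<pi> s \<tau> q))"
    by (intro integrable_measure_pmf_bounded[where B = 1]) (auto intro!: mult_le_one)
  have "(\<integral>\<^sup>+r. round_weight s \<tau> \<pi> (filtered_model \<pi>t s \<tau>) h r \<partial>measure_pmf (sample_round m p0 \<pi>t))
      = (\<integral>\<^sup>+q. \<integral>\<^sup>+as. round_weight s \<tau> \<pi> (filtered_model \<pi>t s \<tau>) h (q, as)
          \<partial>measure_pmf (replicate_pmf m (\<pi>t q)) \<partial>measure_pmf p0)"
    by (simp add: sample_round_def)
  also have "\<dots> \<le> (\<integral>\<^sup>+q. ennreal (g q) \<partial>measure_pmf p0)"
  proof (intro nn_integral_mono_AE, unfold AE_measure_pmf_iff, intro ballI)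
    fix q assume "q \<in> set_pmf p0"
    then show "(\<integral>\<^sup>+as. round_weight s \<tau> \<pi> (filtered_model \<pi>t s \<tau>) h (q, as)
        \<partial>measure_pmf (replicate_pmf m (\<pi>t q))) \<le> ennreal (g q)"
      unfolding g_def by (rule nn_integral_round_weight_question_le[OF pos])
  qed
  also have "\<dots> = ennreal (measure_pmf.expectation p0 g)"
    using g_bounds
    by (intro nn_integral_eq_integral integrable_measure_pmf_bounded[where B = "1 + exp h"]) auto
  also have "g = (\<lambda>q. 1 - (1 - exp h) * acc_rate_m m \<pi>t s \<tau> q
      - exp h / 2 * (acc_rate_m m \<pi>t s \<tau> q * (1 - acc_rate \<pi> s \<tau> q)))"
    by (auto simp: g_def fun_eq_iff field_simps)
  also have "measure_pmf.expectation p0 \<dots>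
      = 1 - (1 - exp h) * glob_acc_m m p0 \<pi>t s \<tau> - exp h / 2 * rej_weight m p0 \<pi>t \<pi> s \<tau>"
    using int_W unfolding glob_acc_m_def rej_weight_def
    by (simp add: Bochner_Integration.integral_diff integrable_acc_rate_m)
  finally show ?thesis .
qed

lemma prod_list_round_weight:
  "prod_list (map (round_weight s \<tau> \<pi> \<sigma> h) \<omega>)
    = ennreal (exp h ^ length (accepted_data s \<tau> \<omega>)
        * prod_list (map (sqrt_lik_ratio \<pi> \<sigma>) (accepted_data s \<tau> \<omega>)))"
proof (induction \<omega>)
  case (Cons r \<omega>)
  then show ?case
    by (cases "first_accepted s \<tau> r")
       (simp_all add: accepted_data_eq round_weight_def ennreal_mult' sqrt_lik_ratio_def split_def ac_simps)
qed (simp add: accepted_data_eq)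

lemma exp_mult_one_minus_le_1:
  fixes h :: real
  shows "exp h * (1 - h) \<le> 1"
proof -
  have "exp h * (1 - h) \<le> exp h * exp (- h)"
    using exp_ge_add_one_self[of "- h"] by (intro mult_left_mono) auto
  then show ?thesis
    by (simp add: exp_minus)
qed

lemma likelihood_filtered_model_pos:
  assumes "\<omega> \<in> set_pmf (sample_pmf n m p0 \<pi>t)"
  shows "0 < likelihood (filtered_model \<pi>t s \<tau>) (accepted_data s \<tau> \<omega>)"
proof -
  have "0 < pmf (filtered_model \<pi>t s \<tau> q) a" if "(q, a) \<in> set (accepted_data s \<tau> \<omega>)" for q a
  proof -
    have "a \<in> set_pmf (\<pi>t q) \<inter> {a. \<tau> \<le> s q a}"
      using accepted_data_in_support[OF assms that] by simp
    then have "a \<in> set_pmf (filtered_model \<pi>t s \<tau> q)"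
      unfolding filtered_model_def by (subst set_cond_pmf) auto
    then show ?thesis
      by (rule pmf_positive)
  qed
  then show ?thesis
    by (rule likelihood_pos)
qed

lemma prod_round_weight_ge_if_mle_prefers:
  assumes "\<omega> \<in> set_pmf (sample_pmf n m p0 \<pi>t)" and "0 < length (accepted_data s \<tau> \<omega>)"
    and "avg_loglik (filtered_model \<pi>t s \<tau>) (accepted_data s \<tau> \<omega>) \<le> avg_loglik \<pi> (accepted_data s \<tau> \<omega>)"
  shows "ennreal (exp h ^ length (accepted_data s \<tau> \<omega>))
    \<le> prod_list (map (round_weight s \<tau> \<pi> (filtered_model \<pi>t s \<tau>) h) \<omega>)"
proof -
  let ?D = "accepted_data s \<tau> \<omega>" and ?\<sigma> = "filtered_model \<pi>t s \<tau>"
  have pos: "0 < likelihood ?\<sigma> ?D"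
    using assms(1) by (rule likelihood_filtered_model_pos)
  with assms(2,3) have "likelihood ?\<sigma> ?D \<le> likelihood \<pi> ?D"
    by (intro likelihood_le_if_avg_loglik_le)
  with pos have "1 \<le> prod_list (map (sqrt_lik_ratio \<pi> ?\<sigma>) ?D)"
    by (simp add: prod_list_sqrt_lik_ratio)
  then have "exp h ^ length ?D * 1 \<le> exp h ^ length ?D * prod_list (map (sqrt_lik_ratio \<pi> ?\<sigma>) ?D)"
    by (intro mult_left_mono) auto
  then show ?thesis
    by (simp add: prod_list_round_weight ennreal_leI)
qed

lemma nn_integral_round_weight_le_1:
  fixes \<pi> :: "'q \<Rightarrow> 'a pmf"
  assumes acc_pos: "0 < min_acc_rate p0 \<pi>t s \<tau>" and m: "1 \<le> m"
  defines "h \<equiv> rej_weight m p0 \<pi>t \<pi> s \<tau> / (2 * glob_acc_m m p0 \<pi>t s \<tau>)"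
  shows "(\<integral>\<^sup>+r. round_weight s \<tau> \<pi> (filtered_model \<pi>t s \<tau>) h r \<partial>measure_pmf (sample_round m p0 \<pi>t)) \<le> 1"
proof -
  let ?Z = "glob_acc_m m p0 \<pi>t s \<tau>" and ?W = "rej_weight m p0 \<pi>t \<pi> s \<tau>"
  have Z_pos: "0 < ?Z"
    using ess_acc_m_pos[OF acc_pos m] ess_acc_m_le_glob_acc_m by (rule less_le_trans)
  have "(\<integral>\<^sup>+r. round_weight s \<tau> \<pi> (filtered_model \<pi>t s \<tau>) h r \<partial>measure_pmf (sample_round m p0 \<pi>t))
      \<le> ennreal (1 - (1 - exp h) * ?Z - exp h / 2 * ?W)"
    by (intro nn_integral_round_weight_le less_le_trans[OF acc_pos min_acc_rate_le_acc_rate])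
  moreover have "1 - (1 - exp h) * ?Z - exp h / 2 * ?W = 1 - ?Z * (1 - exp h * (1 - h))"
    using Z_pos by (simp add: h_def field_simps)
  moreover have "1 - ?Z * (1 - exp h * (1 - h)) \<le> 1"
    using Z_pos exp_mult_one_minus_le_1[of h] by simp
  ultimately show ?thesis
    by (metis ennreal_1 ennreal_leI order_trans)
qed

lemma prob_mle_prefers_model_le:
  fixes \<pi> :: "'q \<Rightarrow> 'a pmf"
  assumes acc_pos: "0 < min_acc_rate p0 \<pi>t s \<tau>" and m: "1 \<le> m"
  defines "h \<equiv> rej_weight m p0 \<pi>t \<pi> s \<tau> / (2 * glob_acc_m m p0 \<pi>t s \<tau>)"
  shows "measure_pmf.prob (sample_pmf n m p0 \<pi>t)
      {\<omega>. let D = accepted_data s \<tau> \<omega> in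
        0 < length D \<and> avg_loglik (filtered_model \<pi>t s \<tau>) D \<le> avg_loglik \<pi> D \<and> c < real (length D) * h}
    \<le> exp (- c)"
    (is "measure_pmf.prob ?P ?B \<le> _")
proof -
  let ?w = "round_weight s \<tau> \<pi> (filtered_model \<pi>t s \<tau>) h"
  have markov: "indicator ?B \<omega> \<le> ennreal (exp (- c)) * prod_list (map ?w \<omega>)"
    if \<omega>: "\<omega> \<in> set_pmf ?P" for \<omega>
  proof (cases "\<omega> \<in> ?B")
    case True
    let ?N = "length (accepted_data s \<tau> \<omega>)"
    have "ennreal 1 \<le> ennreal (exp (- c)) * ennreal (exp h ^ ?N)"
      using True by (auto simp: Let_def ennreal_mult[symmetric] exp_add[symmetric]
          exp_of_nat_mult[symmetric] mult.commute intro!: ennreal_leI)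
    also have "\<dots> \<le> ennreal (exp (- c)) * prod_list (map ?w \<omega>)"
      using True by (intro mult_left_mono prod_round_weight_ge_if_mle_prefers[OF \<omega>]) (auto simp: Let_def)
    finally show ?thesis
      using True by simp
  qed simp
  have "emeasure (measure_pmf ?P) ?B \<le> (\<integral>\<^sup>+\<omega>. ennreal (exp (- c)) * prod_list (map ?w \<omega>) \<partial>measure_pmf ?P)"
    using markov by (auto simp: AE_measure_pmf_iff intro!: nn_integral_mono_AE simp flip: nn_integral_indicator)
  also have "\<dots> \<le> ennreal (exp (- c))"
    using nn_integral_round_weight_le_1[OF acc_pos m, of \<pi>, folded h_def]
    by (simp add: nn_integral_cmult sample_pmf_eq nn_integral_prod_list_replicate_pmf mult_left_le power_le_one)
  finally show ?thesis
    by (simp add: measure_pmf.emeasure_eq_measure)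
qed

section \<open>The reward bound\<close>

lemma exp_reward_ge_acc_rate:
  assumes s_range: "\<And>q a. 0 \<le> s q a \<and> s q a \<le> 1" and tau: "0 \<le> \<tau>"
  shows "\<tau> * measure_pmf.expectation p0 (acc_rate \<pi> s \<tau>) \<le> exp_reward p0 \<pi> s"
proof -
  let ?M = "bind_pmf p0 (\<lambda>q. map_pmf (\<lambda>a. (q, a)) (\<pi> q))"
  have "ennreal (\<tau> * measure_pmf.expectation p0 (acc_rate \<pi> s \<tau>))
      = ennreal (measure_pmf.expectation p0 (\<lambda>q. \<tau> * acc_rate \<pi> s \<tau> q))"
    by simp
  also have "\<dots> = (\<integral>\<^sup>+q. ennreal (\<tau> * acc_rate \<pi> s \<tau> q) \<partial>measure_pmf p0)"
    using tau
    by (intro nn_integral_eq_integral[symmetric] integrable_measure_pmf_bounded[where B = \<tau>])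
       (auto intro: mult_left_le)
  also have "\<dots> = (\<integral>\<^sup>+q. \<integral>\<^sup>+a. ennreal \<tau> * indicator {a. \<tau> \<le> s q a} a \<partial>measure_pmf (\<pi> q) \<partial>measure_pmf p0)"
    using tau by (simp add: acc_rate_def nn_integral_cmult_indicator ennreal_mult measure_pmf.emeasure_eq_measure)
  also have "\<dots> \<le> (\<integral>\<^sup>+q. \<integral>\<^sup>+a. ennreal (s q a) \<partial>measure_pmf (\<pi> q) \<partial>measure_pmf p0)"
    using s_range by (intro nn_integral_mono) (auto simp: indicator_def intro: ennreal_leI)
  also have "\<dots> = (\<integral>\<^sup>+x. ennreal (case x of (q, a) \<Rightarrow> s q a) \<partial>measure_pmf ?M)"
    by simp
  also have "\<dots> = ennreal (exp_reward p0 \<pi> s)"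
    unfolding exp_reward_def using s_range
    by (intro nn_integral_eq_integral integrable_measure_pmf_bounded[where B = 1]) (auto split: prod.splits)
  finally show ?thesis
    using s_range by (simp add: exp_reward_def integral_nonneg_AE split: prod.splits)
qed

lemma exp_reward_nonneg:
  assumes "\<And>q a. 0 \<le> s q a"
  shows "0 \<le> exp_reward p0 \<pi> s"
  unfolding exp_reward_def using assms by (auto intro!: integral_nonneg_AE split: prod.splits)

lemma one_minus_mult_sqrt_le:
  fixes r x :: real
  assumes "1 \<le> r" "0 \<le> x"
  shows "1 - r * sqrt x \<le> max 0 (1 - r * x)"
proof (cases "x \<le> 1")
  case True
  then have "x \<le> sqrt x"
    using assms(2) by (intro real_le_rsqrt) (simp add: power2_eq_square mult_left_le)
  then have "r * x \<le> r * sqrt x"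
    using assms by (intro mult_left_mono) auto
  then show ?thesis
    by simp
next
  case False
  then have "1 * 1 \<le> r * sqrt x"
    using assms by (intro mult_mono) auto
  then show ?thesis
    by simp
qed

lemma exp_reward_lower_bound:
  assumes s_range: "\<And>q a. 0 \<le> s q a \<and> s q a \<le> 1" and tau: "0 < \<tau>"
    and A_pos: "0 < A" and A_le: "\<And>q. q \<in> set_pmf p0 \<Longrightarrow> A \<le> acc_rate_m m \<pi>t s \<tau> q"
    and N: "0 < N" and c: "0 \<le> c"
    and exponent: "N * (rej_weight m p0 \<pi>t \<pi> s \<tau> / (2 * glob_acc_m m p0 \<pi>t s \<tau>)) \<le> c"
  shows "\<tau> * (1 - glob_acc_m m p0 \<pi>t s \<tau> / A * sqrt (2 * c / N)) \<le> exp_reward p0 \<pi> s"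
proof -
  let ?Z = "glob_acc_m m p0 \<pi>t s \<tau>" and ?W = "rej_weight m p0 \<pi>t \<pi> s \<tau>"
  let ?R = "measure_pmf.expectation p0 (\<lambda>q. 1 - acc_rate \<pi> s \<tau> q)"
  have int_acc: "integrable (measure_pmf p0) (acc_rate \<pi> s \<tau>)"
    by (intro integrable_measure_pmf_bounded[where B = 1]) simp
  have "A \<le> ?Z"
    unfolding glob_acc_m_def using A_le
    by (intro measure_pmf.integral_ge_const integrable_acc_rate_m) (simp add: AE_measure_pmf_iff)
  then have ratio: "1 \<le> ?Z / A" and Z_pos: "0 < ?Z"
    using A_pos by simp_all
  have "A * ?R = measure_pmf.expectation p0 (\<lambda>q. A * (1 - acc_rate \<pi> s \<tau> q))"
    by simp
  also have "\<dots> \<le> ?W"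
    unfolding rej_weight_def
  proof (rule integral_mono_AE)
    show "integrable (measure_pmf p0) (\<lambda>q. A * (1 - acc_rate \<pi> s \<tau> q))"
      "integrable (measure_pmf p0) (\<lambda>q. acc_rate_m m \<pi>t s \<tau> q * (1 - acc_rate \<pi> s \<tau> q))"
      using int_acc by (auto intro!: integrable_measure_pmf_bounded[where B = 1] mult_le_one)
    show "AE q in measure_pmf p0. A * (1 - acc_rate \<pi> s \<tau> q) \<le> acc_rate_m m \<pi>t s \<tau> q * (1 - acc_rate \<pi> s \<tau> q)"
      using A_le by (simp add: AE_measure_pmf_iff mult_right_mono)
  qed
  also have "?W \<le> c / N * (2 * ?Z)"
  proof -
    have "?W / (2 * ?Z) \<le> c / N"
      using exponent N by (simp add: pos_le_divide_eq mult.commute)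
    then show ?thesis
      using Z_pos by (simp add: pos_divide_le_eq)
  qed
  finally have R: "?R \<le> ?Z / A * (2 * c / N)"
    using A_pos N by (simp add: field_simps)
  have "\<tau> * (1 - ?Z / A * sqrt (2 * c / N)) \<le> \<tau> * max 0 (1 - ?Z / A * (2 * c / N))"
    using tau ratio N c by (intro mult_left_mono one_minus_mult_sqrt_le) auto
  also have "\<dots> \<le> exp_reward p0 \<pi> s"
  proof -
    have "?R = 1 - measure_pmf.expectation p0 (acc_rate \<pi> s \<tau>)"
      using int_acc by (simp add: Bochner_Integration.integral_diff)
    then have "\<tau> * (1 - ?Z / A * (2 * c / N)) \<le> \<tau> * measure_pmf.expectation p0 (acc_rate \<pi> s \<tau>)"
      using R tau by (intro mult_left_mono) auto
    also have "\<dots> \<le> exp_reward p0 \<pi> s"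
      using s_range tau by (intro exp_reward_ge_acc_rate[where s = s]) auto
    finally have "\<tau> * (1 - ?Z / A * (2 * c / N)) \<le> exp_reward p0 \<pi> s" .
    then show ?thesis
      using exp_reward_nonneg[of s p0 \<pi>] s_range by simp
  qed
  finally show ?thesis .
qed

lemma mle_exp_reward_bound_whp:
  fixes Models :: "('q \<Rightarrow> 'a pmf) set" and est :: "('q \<times> 'a) list \<Rightarrow> 'q \<Rightarrow> 'a pmf"
  assumes s_range: "\<And>q a. 0 \<le> s q a \<and> s q a \<le> 1" and tau: "0 < \<tau>"
    and fin: "finite Models" and realizable: "filtered_model \<pi>t s \<tau> \<in> Models"
    and est_in: "\<And>D. est D \<in> Models"
    and est_max: "\<And>D \<pi>. \<pi> \<in> Models \<Longrightarrow> avg_loglik \<pi> D \<le> avg_loglik (est D) D"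
    and acc_pos: "0 < min_acc_rate p0 \<pi>t s \<tau>" and m: "1 \<le> m"
    and delta: "0 < \<delta>" "\<delta> < 1"
  shows "1 - \<delta> \<le> measure_pmf.prob (sample_pmf n m p0 \<pi>t)
           {\<omega>. let D = accepted_data s \<tau> \<omega>; N = length D in
                 0 < N \<longrightarrow>
                 exp_reward p0 (est D) s \<ge>
                   \<tau> * (1 - glob_acc_m m p0 \<pi>t s \<tau> / real_of_ereal (ess_acc_m m p0 \<pi>t s \<tau>)
                          * sqrt (2 * ln (real (card Models) / \<delta>) / real N))}"
    (is "_ \<le> measure_pmf.prob ?P ?good")
proof -
  let ?\<sigma> = "filtered_model \<pi>t s \<tau>"
  define c where "c = ln (real (card Models) / \<delta>)"
  define h where "h \<pi> = rej_weight m p0 \<pi>t \<pi> s \<tau> / (2 * glob_acc_m m p0 \<pi>t s \<tau>)" for \<pi>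
  define bad where "bad \<pi> = {\<omega>. let D = accepted_data s \<tau> \<omega> in
    0 < length D \<and> avg_loglik ?\<sigma> D \<le> avg_loglik \<pi> D \<and> c < real (length D) * h \<pi>}" for \<pi>
  have card: "1 \<le> card Models"
    using fin realizable by (metis One_nat_def Suc_leI card_gt_0_iff empty_iff)
  then have c_pos: "0 < c" and exp_c: "exp (- c) = \<delta> / card Models"
    using delta by (simp_all add: c_def ln_gt_zero_iff field_simps exp_minus)
  have "- ?good \<subseteq> (\<Union>\<pi>\<in>Models. bad \<pi>)"
  proof
    fix \<omega> assume "\<omega> \<in> - ?good"
    define D where "D = accepted_data s \<tau> \<omega>"
    have N: "0 < length D"
      and fail: "\<not> \<tau> * (1 - glob_acc_m m p0 \<pi>t s \<tau> / real_of_ereal (ess_acc_m m p0 \<pi>t s \<tau>)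
          * sqrt (2 * c / length D)) \<le> exp_reward p0 (est D) s"
      using \<open>\<omega> \<in> - ?good\<close> by (simp_all add: D_def c_def Let_def)
    have "c < length D * h (est D)"
      by (rule ccontr)
         (use fail exp_reward_lower_bound[OF s_range tau ess_acc_m_pos[OF acc_pos m]
            ess_acc_m_le_acc_rate_m, where N = "real (length D)" and c = c and \<pi> = "est D"] N c_pos
          in \<open>simp add: h_def\<close>)
    then have "\<omega> \<in> bad (est D)"
      using N est_max[OF realizable] by (simp add: bad_def D_def)
    then show "\<omega> \<in> (\<Union>\<pi>\<in>Models. bad \<pi>)"
      using est_in by blast
  qed
  then have "measure_pmf.prob ?P (- ?good) \<le> measure_pmf.prob ?P (\<Union>\<pi>\<in>Models. bad \<pi>)"
    by (intro measure_pmf.finite_measure_mono) auto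
  also have "\<dots> \<le> (\<Sum>\<pi>\<in>Models. measure_pmf.prob ?P (bad \<pi>))"
    using fin by (intro measure_pmf.finite_measure_subadditive_finite) auto
  also have "\<dots> \<le> (\<Sum>\<pi>\<in>Models. exp (- c))"
    unfolding bad_def h_def by (intro sum_mono prob_mle_prefers_model_le acc_pos m)
  also have "\<dots> = \<delta>"
    using card by (simp add: exp_c)
  finally show ?thesis
    using measure_pmf.prob_compl[of "?good" ?P] by (simp add: Compl_eq_Diff_UNIV)
qed

theorem theorem4p1:
  fixes p0 :: "'q pmf"
    and s :: "'q \<Rightarrow> 'a \<Rightarrow> real"
    and \<tau> :: real
    and Models :: "('q \<Rightarrow> 'a pmf) set"
    and \<pi>t :: "'q \<Rightarrow> 'a pmf"
    and est :: "('q \<times> 'a) list \<Rightarrow> ('q \<Rightarrow> 'a pmf)"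
    and n m :: nat
    and \<delta> :: real
  assumes s_range: "\<And>q a. 0 \<le> s q a \<and> s q a \<le> 1"
    and tau: "0 < \<tau>" "\<tau> \<le> 1"
    and fin: "finite Models"
    and cur: "\<pi>t \<in> Models"
    and alpha_pos: "\<And>q. 0 < acc_rate \<pi>t s \<tau> q"
    and realizable: "(\<lambda>q. cond_pmf (\<pi>t q) {a. \<tau> \<le> s q a}) \<in> Models"
    and est_in: "\<And>D. est D \<in> Models"
    and est_max: "\<And>D \<pi>. \<pi> \<in> Models \<Longrightarrow> avg_loglik \<pi> D \<le> avg_loglik (est D) D"
    and ess_pos: "ess_inf (measure_pmf p0) (acc_rate \<pi>t s \<tau>) > 0"
    and m_pos: "1 \<le> m"
    and delta: "0 < \<delta>" "\<delta> < 1"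
  shows "measure_pmf.prob (sample_pmf n m p0 \<pi>t)
           {\<omega>. let D = accepted_data s \<tau> \<omega>; N = length D in
                 0 < N \<longrightarrow>
                 exp_reward p0 (est D) s \<ge>
                   \<tau> * (1 - glob_acc_m m p0 \<pi>t s \<tau> / real_of_ereal (ess_acc_m m p0 \<pi>t s \<tau>)
                          * sqrt (2 * ln (real (card Models) / \<delta>) / real N))}
         \<ge> 1 - \<delta>
       \<and> (\<forall>m1 m2. 1 \<le> m1 \<longrightarrow> m1 \<le> m2 \<longrightarrow>
            glob_acc_m m2 p0 \<pi>t s \<tau> / real_of_ereal (ess_acc_m m2 p0 \<pi>t s \<tau>)
            \<le> glob_acc_m m1 p0 \<pi>t s \<tau> / real_of_ereal (ess_acc_m m1 p0 \<pi>t s \<tau>))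
       \<and> ((\<lambda>k. glob_acc_m k p0 \<pi>t s \<tau> / real_of_ereal (ess_acc_m k p0 \<pi>t s \<tau>))
            \<longlonglongrightarrow> 1)"
proof -
  have acc_pos: "0 < min_acc_rate p0 \<pi>t s \<tau>"
    using ess_pos by (simp add: ess_inf_acc_rate)
  have acc_bounds: "q \<in> set_pmf p0 \<Longrightarrow> min_acc_rate p0 \<pi>t s \<tau> \<le> acc_rate \<pi>t s \<tau> q \<and> acc_rate \<pi>t s \<tau> q \<le> 1" for q
    by (simp add: min_acc_rate_le_acc_rate)
  have ratio: "glob_acc_m k p0 \<pi>t s \<tau> / real_of_ereal (ess_acc_m k p0 \<pi>t s \<tau>)
      = measure_pmf.expectation p0 (\<lambda>q. 1 - (1 - acc_rate \<pi>t s \<tau> q) ^ k)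
        / (1 - (1 - min_acc_rate p0 \<pi>t s \<tau>) ^ k)" for k
    by (simp add: glob_acc_m_def acc_rate_m_def[abs_def] ess_acc_m_eq)
  have filtered_in_Models: "filtered_model \<pi>t s \<tau> \<in> Models"
    using realizable by (simp add: filtered_model_def[abs_def])
  note ratio_facts = expectation_one_minus_power_ratio_antimono[where p = p0 and f = "acc_rate \<pi>t s \<tau>",
      OF acc_pos acc_bounds]
    expectation_one_minus_power_ratio_tendsto_1[where p = p0 and f = "acc_rate \<pi>t s \<tau>",
      OF acc_pos acc_bounds]
  show ?thesis
    using mle_exp_reward_bound_whp[OF s_range tau(1) fin filtered_in_Models est_in est_max acc_pos m_pos delta]
      ratio_facts unfolding ratio by blast
qed

end
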